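(* Let $(Y,X,A)$ be a random triple with $Y\in\mathbb{R}$, $X\in\mathcal{X}\subset\mathbb{R}^d$ having density $p(x)$, and $A\in\{0,1\}$, with $\mathbb{E}[Y^2]<\infty$. Define the response functions $\mu_a(x)=\mathbb{E}[Y\mid X=x,A=a]$ for $a\in\{0,1\}$, the propensity score $e(x)=\mathbb{P}(A=1\mid X=x)$, the conditional mean outcome $m(x)=\mathbb{E}[Y\mid X=x]$, and $\tau(x)=\mu_1(x)-\mu_0(x)$. For $a\in\{0,1\}$ let $\sigma_y^2(x;a)=\int (y-\mu_a(x))^2\, p(y\mid X=x, A=a)\,dy$ and $\tilde\sigma_B^2(a)=\int_{\mathcal{X}}\sigma_y^2(x;a)\,p(x;a)\,dx$, where $p(x;a)$ denotes the joint density of $(X=x,A=a)$. Let $f:\mathcal{X}\times\{0,1\}\to\mathbb{R}$ be an outcome model (with $\mathbb{E}[f(X,a)^2]<\infty$) and $\tau_f(x)=f(x,1)-f(x,0)$. Define $$R\text{-risk}^*(f)=\mathbb{E}\Big[\big((Y-m(X))-(A-e(X))\,\tau_f(X)\big)^2\Big].$$ Then $$R\text{-risk}^*(f)=\int_{\mathcal{X}} e(x)\big(1-e(x)\big)\big(\tau(x)-\tau_f(x)\big)^2\,p(x)\,dx+\tilde\sigma_B^2(1)+\tilde\sigma_B^2(0).$$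
   Context: Setting of binary-treatment causal inference in the potential outcomes framework; under the standard strong ignorability assumptions $\tau(x)=\mu_1(x)-\mu_0(x)$ is the conditional average treatment effect, and $\int (\tau(x)-\tau_f(x))^2p(x)dx$ is the oracle "$\tau$-risk" of $f$. The risk $R\text{-risk}^*$ is the semi-oracle R-risk, using the true nuisances $m$ and $e$. *)

theory Defs
  imports "HOL-Probability.Probability"
begin

text \<open>Model: covariate X with density p on the domain, treatment A in {0,1} with
  P(A=1 | X=x) = e x, outcome Y with conditional density q x a y = p(y | X=x, A=a).
  The joint density of (X,A,Y) w.r.t. lborel x counting measure on {0,1} x lborel
  is then p x * P(A=a | X=x) * q x a y.\<close>

definition treat_prob :: "('x \<Rightarrow> real) \<Rightarrow> 'x \<Rightarrow> real \<Rightarrow> real" where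
  "treat_prob e x a = (if a = 1 then e x else 1 - e x)"

definition joint_xa :: "('x \<Rightarrow> real) \<Rightarrow> ('x \<Rightarrow> real) \<Rightarrow> 'x \<Rightarrow> real \<Rightarrow> real" where
  "joint_xa p e x a = p x * treat_prob e x a"

definition resp :: "('x \<Rightarrow> real \<Rightarrow> real \<Rightarrow> real) \<Rightarrow> real \<Rightarrow> 'x \<Rightarrow> real" where
  "resp q a x = (\<integral>y. y * q x a y \<partial>lborel)"

text \<open>conditional mean outcome m(x) = E[Y | X=x], using p(y | X=x) = sum_a P(A=a|X=x) p(y|x,a)\<close>
definition cond_mean :: "('x \<Rightarrow> real) \<Rightarrow> ('x \<Rightarrow> real \<Rightarrow> real \<Rightarrow> real) \<Rightarrow> 'x \<Rightarrow> real" where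
  "cond_mean e q x = (\<integral>y. y * (e x * q x 1 y + (1 - e x) * q x 0 y) \<partial>lborel)"

definition cate :: "('x \<Rightarrow> real \<Rightarrow> real \<Rightarrow> real) \<Rightarrow> 'x \<Rightarrow> real" where
  "cate q x = resp q 1 x - resp q 0 x"

definition tau_f :: "('x \<Rightarrow> real \<Rightarrow> real) \<Rightarrow> 'x \<Rightarrow> real" where
  "tau_f f x = f x 1 - f x 0"

definition sigma_y2 :: "('x \<Rightarrow> real \<Rightarrow> real \<Rightarrow> real) \<Rightarrow> 'x \<Rightarrow> real \<Rightarrow> real" where
  "sigma_y2 q x a = (\<integral>y. (y - resp q a x)\<^sup>2 * q x a y \<partial>lborel)"

definition sigma_B2 :: "'x::euclidean_space set \<Rightarrow> ('x \<Rightarrow> real) \<Rightarrow> ('x \<Rightarrow> real) \<Rightarrow>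
    ('x \<Rightarrow> real \<Rightarrow> real \<Rightarrow> real) \<Rightarrow> real \<Rightarrow> real" where
  "sigma_B2 XX p e q a = (\<integral>x\<in>XX. sigma_y2 q x a * joint_xa p e x a \<partial>lborel)"

definition R_risk_star :: "'w measure \<Rightarrow> ('w \<Rightarrow> 'x) \<Rightarrow> ('w \<Rightarrow> real) \<Rightarrow> ('w \<Rightarrow> real) \<Rightarrow>
    ('x \<Rightarrow> real) \<Rightarrow> ('x \<Rightarrow> real) \<Rightarrow> ('x \<Rightarrow> real \<Rightarrow> real) \<Rightarrow> real" where
  "R_risk_star M X A Y m e f =
     (\<integral>\<omega>. ((Y \<omega> - m (X \<omega>)) - (A \<omega> - e (X \<omega>)) * tau_f f (X \<omega>))\<^sup>2 \<partial>M)"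

end

theory Submission
  imports Defs
begin

(* Disintegrating along the joint density of (X, A, Y), the risk becomes
   \<integral>_XX \<Sum>_a p(x;a) E[(Y - c_a(x))\<^sup>2 | X = x, A = a] dx  with  c_a = m + (a - e) \<tau>_f,
   and each conditional second moment splits as \<sigma>_y\<^sup>2(x;a) + (\<mu>_a(x) - c_a(x))\<^sup>2.
   Since m = e \<mu>_1 + (1 - e) \<mu>_0, the biases are \<mu>_1 - c_1 = (1 - e)(\<tau> - \<tau>_f) and
   \<mu>_0 - c_0 = -e (\<tau> - \<tau>_f); weighted by e and 1 - e they add up to e (1 - e)(\<tau> - \<tau>_f)\<^sup>2.
   Everything is computed with nonnegative integrals, so Tonelli needs no integrability side
   conditions; E[Y\<^sup>2] < \<infinity> and E[\<tau>_f(X)\<^sup>2] < \<infinity> make the fibrewise moments finite almost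
   everywhere and the total risk finite, which justifies the return to Lebesgue integrals. *)

lemma nn_integral_distributed_lborel_count_lborel:
  fixes Z :: "'w \<Rightarrow> 'x::euclidean_space \<times> real \<times> real"
    and g :: "'x \<Rightarrow> real \<Rightarrow> real \<Rightarrow> real"
    and h :: "'x \<times> real \<times> real \<Rightarrow> ennreal"
  assumes distr: "distributed M (lborel \<Otimes>\<^sub>M count_space {0, 1} \<Otimes>\<^sub>M lborel) Z
      (\<lambda>(x, a, y). ennreal (g x a y))"
    and g_measurable:
      "(\<lambda>(x, a, y). g x a y) \<in> borel_measurable (lborel \<Otimes>\<^sub>M count_space {0, 1} \<Otimes>\<^sub>M lborel)"
    and h_measurable: "h \<in> borel_measurable (lborel \<Otimes>\<^sub>M count_space {0, 1} \<Otimes>\<^sub>M lborel)"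
  shows "(\<integral>\<^sup>+\<omega>. h (Z \<omega>) \<partial>M) =
    (\<integral>\<^sup>+x. (\<Sum>a\<in>{0, 1}. \<integral>\<^sup>+y. ennreal (g x a y) * h (x, a, y) \<partial>lborel) \<partial>lborel)"
proof -
  let ?AY = "count_space {0, 1::real} \<Otimes>\<^sub>M (lborel :: real measure)"
  let ?N = "lborel \<Otimes>\<^sub>M ?AY"
  let ?g = "\<lambda>(x, a, y). ennreal (g x a y)"
  have [measurable]: "?g \<in> borel_measurable ?N"
    using g_measurable by (simp add: case_prod_beta')
  note [measurable] = h_measurable
  interpret AY: sigma_finite_measure ?AY
    by (intro sigma_finite_pair_measure sigma_finite_measure_count_space_finite
        lborel.sigma_finite_measure_axioms) simp
  have "(\<integral>\<^sup>+\<omega>. h (Z \<omega>) \<partial>M) = integral\<^sup>N (density ?N ?g) h"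
    by (simp add: nn_integral_distr[OF distributed_measurable[OF distr]]
        distributed_distr_eq_density[OF distr, symmetric])
  also have "\<dots> = (\<integral>\<^sup>+w. ?g w * h w \<partial>?N)"
    by (rule nn_integral_density) measurable
  also have "\<dots> = (\<integral>\<^sup>+x. \<integral>\<^sup>+ay. ?g (x, ay) * h (x, ay) \<partial>?AY \<partial>lborel)"
    by (rule AY.nn_integral_fst[symmetric]) measurable
  also have "\<dots> = (\<integral>\<^sup>+x. (\<Sum>a\<in>{0, 1}. \<integral>\<^sup>+y. ?g (x, a, y) * h (x, a, y) \<partial>lborel) \<partial>lborel)"
  proof (rule nn_integral_cong)
    fix x :: 'x
    have "(\<integral>\<^sup>+ay. ?g (x, ay) * h (x, ay) \<partial>?AY)
        = (\<integral>\<^sup>+a. \<integral>\<^sup>+y. ?g (x, a, y) * h (x, a, y) \<partial>lborel \<partial>count_space {0, 1})"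
      by (rule lborel.nn_integral_fst[symmetric]) measurable
    then show "(\<integral>\<^sup>+ay. ?g (x, ay) * h (x, ay) \<partial>?AY)
        = (\<Sum>a\<in>{0, 1}. \<integral>\<^sup>+y. ?g (x, a, y) * h (x, a, y) \<partial>lborel)"
      by (simp add: nn_integral_count_space_finite)
  qed
  finally show ?thesis by simp
qed

lemma integrable_first_moment_of_second_moment:
  fixes g :: "real \<Rightarrow> real"
  assumes "integrable lborel g" "\<And>y. 0 \<le> g y" "integrable lborel (\<lambda>y. y\<^sup>2 * g y)"
  shows "integrable lborel (\<lambda>y. y * g y)"
proof (rule Bochner_Integration.integrable_bound)
  show "integrable lborel (\<lambda>y. g y + y\<^sup>2 * g y)"
    using assms by (intro Bochner_Integration.integrable_add)
  show "(\<lambda>y. y * g y) \<in> borel_measurable lborel"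
    using borel_measurable_integrable[OF assms(1)] by measurable
  show "AE y in lborel. norm (y * g y) \<le> norm (g y + y\<^sup>2 * g y)"
  proof (rule AE_I2)
    fix y :: real
    have "\<bar>y\<bar> \<le> 1 + y\<^sup>2"
      using zero_le_power2[of "\<bar>y\<bar> - 1"] by (simp add: power2_eq_square algebra_simps abs_mult_self_eq)
    then show "norm (y * g y) \<le> norm (g y + y\<^sup>2 * g y)"
      using assms(2)[of y] mult_right_mono by (fastforce simp: abs_mult algebra_simps)
  qed
qed

lemma bias_variance_decomposition:
  fixes g :: "real \<Rightarrow> real" and c :: real
  defines "\<mu> \<equiv> \<integral>y. y * g y \<partial>lborel"
  assumes "integrable lborel g" "(\<integral>y. g y \<partial>lborel) = 1"
    and "integrable lborel (\<lambda>y. y * g y)" "integrable lborel (\<lambda>y. y\<^sup>2 * g y)"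
  shows "integrable lborel (\<lambda>y. (y - c)\<^sup>2 * g y)"
    and "(\<integral>y. (y - c)\<^sup>2 * g y \<partial>lborel) = (\<integral>y. (y - \<mu>)\<^sup>2 * g y \<partial>lborel) + (\<mu> - c)\<^sup>2"
proof -
  have expand: "(y - c)\<^sup>2 * g y = y\<^sup>2 * g y - 2 * c * (y * g y) + c\<^sup>2 * g y" for c y
    by (simp add: power2_eq_square algebra_simps)
  show "integrable lborel (\<lambda>y. (y - c)\<^sup>2 * g y)" for c
    unfolding expand using assms by (intro Bochner_Integration.integrable_add
        Bochner_Integration.integrable_diff Bochner_Integration.integrable_mult_right)
  have second_moment: "(\<integral>y. (y - c)\<^sup>2 * g y \<partial>lborel) = (\<integral>y. y\<^sup>2 * g y \<partial>lborel) - 2 * c * \<mu> + c\<^sup>2" for c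
    unfolding expand \<mu>_def using assms by simp
  show "(\<integral>y. (y - c)\<^sup>2 * g y \<partial>lborel) = (\<integral>y. (y - \<mu>)\<^sup>2 * g y \<partial>lborel) + (\<mu> - c)\<^sup>2"
    unfolding second_moment by (simp add: power2_eq_square algebra_simps)
qed

lemma nn_integral_weighted:
  fixes g h :: "real \<Rightarrow> real"
  assumes "0 \<le> w" "\<And>y. 0 \<le> g y" "\<And>y. 0 \<le> h y"
    and "g \<in> borel_measurable lborel" "h \<in> borel_measurable lborel"
  shows "(\<integral>\<^sup>+y. ennreal (w * g y) * ennreal (h y) \<partial>lborel) = ennreal w * (\<integral>\<^sup>+y. ennreal (h y * g y) \<partial>lborel)"
proof -
  have "(\<integral>\<^sup>+y. ennreal (w * g y) * ennreal (h y) \<partial>lborel) = (\<integral>\<^sup>+y. ennreal w * ennreal (h y * g y) \<partial>lborel)"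
    using assms(1-3) by (intro nn_integral_cong) (simp add: ennreal_mult'[symmetric] mult_ac)
  also have "\<dots> = ennreal w * (\<integral>\<^sup>+y. ennreal (h y * g y) \<partial>lborel)"
    by (intro nn_integral_cmult) (use assms(4,5) in measurable)
  finally show ?thesis .
qed

lemma integrable_second_moment_of_weighted:
  fixes g :: "real \<Rightarrow> real"
  assumes "0 < w" "\<And>y. 0 \<le> g y" "g \<in> borel_measurable lborel"
    and "(\<integral>\<^sup>+y. ennreal (w * g y) * ennreal (y\<^sup>2) \<partial>lborel) \<noteq> \<infinity>"
  shows "integrable lborel (\<lambda>y. y\<^sup>2 * g y)"
proof (rule integrableI_nonneg)
  have "ennreal w * (\<integral>\<^sup>+y. ennreal (y\<^sup>2 * g y) \<partial>lborel) \<noteq> \<infinity>"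
    using assms nn_integral_weighted[of w g "\<lambda>y. y\<^sup>2"] by simp
  then show "(\<integral>\<^sup>+y. ennreal (y\<^sup>2 * g y) \<partial>lborel) < \<infinity>"
    using assms(1) by (simp add: ennreal_mult_eq_top_iff top.not_eq_extremum)
qed (use assms in auto)

lemma nn_integral_weighted_sq_dev:
  fixes g :: "real \<Rightarrow> real" and w c :: real
  defines "\<mu> \<equiv> \<integral>y. y * g y \<partial>lborel"
  assumes g: "integrable lborel g" "(\<integral>y. g y \<partial>lborel) = 1" "\<And>y. 0 \<le> g y"
    and w: "0 \<le> w"
    and finite: "(\<integral>\<^sup>+y. ennreal (w * g y) * ennreal (y\<^sup>2) \<partial>lborel) \<noteq> \<infinity>"
  shows "(\<integral>\<^sup>+y. ennreal (w * g y) * ennreal ((y - c)\<^sup>2) \<partial>lborel)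
      = ennreal (w * ((\<integral>y. (y - \<mu>)\<^sup>2 * g y \<partial>lborel) + (\<mu> - c)\<^sup>2))"
proof (cases "w = 0")
  case False
  have g_measurable: "g \<in> borel_measurable lborel"
    using g(1) by (rule borel_measurable_integrable)
  have second: "integrable lborel (\<lambda>y. y\<^sup>2 * g y)"
    using False w g(3) g_measurable finite by (intro integrable_second_moment_of_weighted) auto
  note decomp = bias_variance_decomposition[OF g(1,2)
      integrable_first_moment_of_second_moment[OF g(1,3) second] second]
  have "(\<integral>\<^sup>+y. ennreal (w * g y) * ennreal ((y - c)\<^sup>2) \<partial>lborel)
      = ennreal w * (\<integral>\<^sup>+y. ennreal ((y - c)\<^sup>2 * g y) \<partial>lborel)"
    using w g(3) g_measurable by (intro nn_integral_weighted) auto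
  also have "(\<integral>\<^sup>+y. ennreal ((y - c)\<^sup>2 * g y) \<partial>lborel) = ennreal (\<integral>y. (y - c)\<^sup>2 * g y \<partial>lborel)"
    using decomp(1) g(3) by (intro nn_integral_eq_integral) auto
  finally show ?thesis
    using w decomp(2)[of c] by (simp add: \<mu>_def ennreal_mult')
qed simp

lemma nn_integral_weighted_density_const:
  fixes g :: "real \<Rightarrow> real"
  assumes "integrable lborel g" "(\<integral>y. g y \<partial>lborel) = 1" "\<And>y. 0 \<le> g y" "0 \<le> w"
  shows "(\<integral>\<^sup>+y. ennreal (w * g y) * K \<partial>lborel) = ennreal w * K"
proof -
  have "(\<integral>\<^sup>+y. ennreal (w * g y) * K \<partial>lborel) = ennreal w * K * (\<integral>\<^sup>+y. ennreal (g y) \<partial>lborel)"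
    using assms by (subst nn_integral_cmult[symmetric])
      (auto simp: ennreal_mult' mult_ac borel_measurable_integrable)
  also have "(\<integral>\<^sup>+y. ennreal (g y) \<partial>lborel) = 1"
    using nn_integral_eq_integral[OF assms(1)] assms(2,3) by simp
  finally show ?thesis by simp
qed

lemma weighted_residual_identity:
  fixes e u0 u1 s0 s1 t :: real
  defines "m \<equiv> e * u1 + (1 - e) * u0"
  shows "(1 - e) * (s0 + (u0 - (m + (0 - e) * t))\<^sup>2) + e * (s1 + (u1 - (m + (1 - e) * t))\<^sup>2)
       = e * (1 - e) * (u1 - u0 - t)\<^sup>2 + e * s1 + (1 - e) * s0"
  unfolding m_def power2_eq_square by algebra

lemma weighted_residual_bound:
  fixes e u0 u1 s0 s1 t :: real
  assumes "0 \<le> e" "e \<le> 1" "0 \<le> s0" "0 \<le> s1"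
  shows "e * (1 - e) * (u1 - u0 - t)\<^sup>2 + e * s1 + (1 - e) * s0
       \<le> 2 * ((1 - e) * (s0 + u0\<^sup>2) + e * (s1 + u1\<^sup>2)) + 2 * t\<^sup>2"
proof -
  have v: "0 \<le> e * (1 - e)" "e * (1 - e) \<le> 1"
    using assms by (auto intro: mult_le_one)
  have "(u1 - u0 - t)\<^sup>2 \<le> 2 * (u1 - u0)\<^sup>2 + 2 * t\<^sup>2"
    using zero_le_power2[of "u1 - u0 + t"] by (simp add: power2_eq_square algebra_simps)
  then have "e * (1 - e) * (u1 - u0 - t)\<^sup>2 \<le> e * (1 - e) * (2 * (u1 - u0)\<^sup>2 + 2 * t\<^sup>2)"
    using v(1) by (rule mult_left_mono)
  also have "\<dots> = 2 * (e * (1 - e) * (u1 - u0)\<^sup>2) + 2 * (e * (1 - e) * t\<^sup>2)"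
    by (simp add: algebra_simps)
  finally have "e * (1 - e) * (u1 - u0 - t)\<^sup>2 \<le> 2 * (e * (1 - e) * (u1 - u0)\<^sup>2) + 2 * (e * (1 - e) * t\<^sup>2)" .
  moreover have "e * (1 - e) * (u1 - u0)\<^sup>2 \<le> e * u1\<^sup>2 + (1 - e) * u0\<^sup>2"
  proof -
    have "e * u1\<^sup>2 + (1 - e) * u0\<^sup>2 - e * (1 - e) * (u1 - u0)\<^sup>2 = (e * u1 + (1 - e) * u0)\<^sup>2"
      by (simp add: power2_eq_square algebra_simps)
    then show ?thesis
      using zero_le_power2[of "e * u1 + (1 - e) * u0"] by linarith
  qed
  moreover have "e * (1 - e) * t\<^sup>2 \<le> t\<^sup>2"
    using v by (simp add: mult_left_le_one_le)
  moreover have "0 \<le> e * s1" "0 \<le> (1 - e) * s0"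
    using assms by simp_all
  moreover have "2 * ((1 - e) * (s0 + u0\<^sup>2) + e * (s1 + u1\<^sup>2))
      = 2 * ((1 - e) * s0) + 2 * (e * s1) + 2 * (e * u1\<^sup>2 + (1 - e) * u0\<^sup>2)"
    by (simp add: algebra_simps)
  ultimately show ?thesis by argo
qed

lemma set_integral_add3_nonneg:
  fixes F G H :: "'a \<Rightarrow> real"
  assumes "S \<in> sets N" "set_integrable N S (\<lambda>x. F x + G x + H x)"
    and "F \<in> borel_measurable N" "G \<in> borel_measurable N" "H \<in> borel_measurable N"
    and "\<And>x. 0 \<le> F x" "\<And>x. 0 \<le> G x" "\<And>x. 0 \<le> H x"
  shows "(\<integral>x\<in>S. F x + G x + H x \<partial>N) = (\<integral>x\<in>S. F x \<partial>N) + (\<integral>x\<in>S. G x \<partial>N) + (\<integral>x\<in>S. H x \<partial>N)"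
proof -
  have summand: "set_integrable N S K"
    if "K \<in> borel_measurable N" "\<And>x. 0 \<le> K x" "\<And>x. K x \<le> F x + G x + H x" for K
    using assms(2) unfolding set_integrable_def
  proof (rule Bochner_Integration.integrable_bound)
    show "(\<lambda>x. indicator S x *\<^sub>R K x) \<in> borel_measurable N"
      using assms(1) that(1) by measurable
    show "AE x in N. norm (indicator S x *\<^sub>R K x) \<le> norm (indicator S x *\<^sub>R (F x + G x + H x))"
      using that(2,3) by (intro AE_I2) (auto simp: indicator_def intro: order_trans[OF _ abs_ge_self])
  qed
  have "F x \<le> F x + G x + H x" "G x \<le> F x + G x + H x" "H x \<le> F x + G x + H x" for x
    using assms(6-8)[of x] by linarith+
  then have "set_integrable N S F" "set_integrable N S G" "set_integrable N S H"
    using assms by (auto intro!: summand)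
  then show ?thesis
    by (simp add: set_integral_add)
qed

lemma integrable_power2_diff:
  fixes f g :: "'a \<Rightarrow> real"
  assumes "f \<in> borel_measurable M" "g \<in> borel_measurable M"
    and "integrable M (\<lambda>x. (f x)\<^sup>2)" "integrable M (\<lambda>x. (g x)\<^sup>2)"
  shows "integrable M (\<lambda>x. (f x - g x)\<^sup>2)"
proof (rule Bochner_Integration.integrable_bound)
  show "integrable M (\<lambda>x. 2 * (f x)\<^sup>2 + 2 * (g x)\<^sup>2)"
    using assms(3,4) by simp
  show "(\<lambda>x. (f x - g x)\<^sup>2) \<in> borel_measurable M"
    using assms(1,2) by measurable
  show "AE x in M. norm ((f x - g x)\<^sup>2) \<le> norm (2 * (f x)\<^sup>2 + 2 * (g x)\<^sup>2)"
  proof (rule AE_I2)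
    fix x
    have "(f x - g x)\<^sup>2 \<le> 2 * (f x)\<^sup>2 + 2 * (g x)\<^sup>2"
      using zero_le_power2[of "f x + g x"] by (simp add: power2_eq_square algebra_simps)
    then show "norm ((f x - g x)\<^sup>2) \<le> norm (2 * (f x)\<^sup>2 + 2 * (g x)\<^sup>2)"
      by simp
  qed
qed

locale binary_treatment_model =
  fixes M :: "'w measure"
    and X :: "'w \<Rightarrow> 'x::euclidean_space" and A :: "'w \<Rightarrow> real" and Y :: "'w \<Rightarrow> real"
    and XX :: "'x set" and p e :: "'x \<Rightarrow> real" and q :: "'x \<Rightarrow> real \<Rightarrow> real \<Rightarrow> real"
  assumes sets_XX [measurable]: "XX \<in> sets lborel"
    and AE_X_in_XX: "AE \<omega> in M. X \<omega> \<in> XX"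
    and measurable_p [measurable]: "p \<in> borel_measurable lborel" and p_nonneg: "\<And>x. p x \<ge> 0"
    and measurable_e [measurable]: "e \<in> borel_measurable lborel"
    and e_bounds: "\<And>x. 0 \<le> e x \<and> e x \<le> 1"
    and measurable_q: "(\<lambda>(x, a, y). q x a y) \<in> borel_measurable (lborel \<Otimes>\<^sub>M count_space {0, 1} \<Otimes>\<^sub>M lborel)"
    and q_nonneg: "\<And>x a y. q x a y \<ge> 0"
    and q_density: "\<And>x a. x \<in> XX \<Longrightarrow> a \<in> {0, 1} \<Longrightarrow>
           integrable lborel (q x a) \<and> (\<integral>y. q x a y \<partial>lborel) = 1"
    and distributed_XAY: "distributed M (lborel \<Otimes>\<^sub>M count_space {0, 1} \<Otimes>\<^sub>M lborel)
           (\<lambda>\<omega>. (X \<omega>, A \<omega>, Y \<omega>))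
           (\<lambda>(x, a, y). ennreal (p x * treat_prob e x a * q x a y))"
    and integrable_Y_sq: "integrable M (\<lambda>\<omega>. (Y \<omega>)\<^sup>2)"
begin

lemma measurable_q_comp [measurable]:
  assumes "F \<in> measurable K lborel" "G \<in> measurable K (count_space {0, 1})" "H \<in> measurable K lborel"
  shows "(\<lambda>w. q (F w) (G w) (H w)) \<in> borel_measurable K"
  using measurable_compose[OF measurable_Pair[OF assms(1) measurable_Pair[OF assms(2,3)]] measurable_q]
  by simp

lemma measurable_XAY [measurable]:
  "X \<in> borel_measurable M" "A \<in> measurable M (count_space {0, 1})" "Y \<in> borel_measurable M"
  using distributed_measurable[OF distributed_XAY] by (auto simp: measurable_pair_iff o_def)

lemma measurable_A [measurable]: "A \<in> borel_measurable M"
  using measurable_compose[OF measurable_XAY(2), of "\<lambda>a. a" borel] by simp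

lemma measurable_resp [measurable]:
  "resp q 0 \<in> borel_measurable lborel" "resp q 1 \<in> borel_measurable lborel"
  unfolding resp_def by measurable

lemma measurable_sigma_y2 [measurable]:
  "(\<lambda>x. sigma_y2 q x 0) \<in> borel_measurable lborel" "(\<lambda>x. sigma_y2 q x 1) \<in> borel_measurable lborel"
  unfolding sigma_y2_def by measurable

lemma measurable_cond_mean [measurable]: "cond_mean e q \<in> borel_measurable lborel"
  unfolding cond_mean_def by measurable

lemma measurable_cate [measurable]: "cate q \<in> borel_measurable lborel"
  unfolding cate_def by measurable

lemma measurable_joint_xa [measurable]:
  "(\<lambda>x. joint_xa p e x 0) \<in> borel_measurable lborel" "(\<lambda>x. joint_xa p e x 1) \<in> borel_measurable lborel"
  unfolding joint_xa_def treat_prob_def by measurable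

lemma joint_xa_nonneg: "0 \<le> joint_xa p e x a"
  using p_nonneg[of x] e_bounds[of x] by (simp add: joint_xa_def treat_prob_def)

lemma sigma_y2_nonneg: "0 \<le> sigma_y2 q x a"
  unfolding sigma_y2_def using q_nonneg by (simp add: Bochner_Integration.integral_nonneg)

lemma nn_integral_XAY:
  assumes "h \<in> borel_measurable (lborel \<Otimes>\<^sub>M count_space {0, 1} \<Otimes>\<^sub>M lborel)"
  shows "(\<integral>\<^sup>+\<omega>. h (X \<omega>, A \<omega>, Y \<omega>) \<partial>M) =
    (\<integral>\<^sup>+x. (\<Sum>a\<in>{0, 1}. \<integral>\<^sup>+y. ennreal (joint_xa p e x a * q x a y) * h (x, a, y) \<partial>lborel) \<partial>lborel)"
proof (rule nn_integral_distributed_lborel_count_lborel[OF _ _ assms])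
  show "distributed M (lborel \<Otimes>\<^sub>M count_space {0, 1} \<Otimes>\<^sub>M lborel) (\<lambda>\<omega>. (X \<omega>, A \<omega>, Y \<omega>))
      (\<lambda>(x, a, y). ennreal (joint_xa p e x a * q x a y))"
    using distributed_XAY by (simp add: joint_xa_def)
  show "(\<lambda>(x, a, y). joint_xa p e x a * q x a y)
      \<in> borel_measurable (lborel \<Otimes>\<^sub>M count_space {0, 1} \<Otimes>\<^sub>M lborel)"
    unfolding joint_xa_def treat_prob_def by measurable
qed

lemma nn_integral_marginal_X:
  assumes "G \<in> borel_measurable lborel" "\<And>x. 0 \<le> G x"
  shows "(\<integral>\<^sup>+\<omega>. ennreal (G (X \<omega>)) \<partial>M) = (\<integral>\<^sup>+x. ennreal (indicator XX x * (p x * G x)) \<partial>lborel)"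
proof -
  note [measurable] = assms(1)
  have "(\<integral>\<^sup>+\<omega>. ennreal (G (X \<omega>)) \<partial>M) = (\<integral>\<^sup>+\<omega>. ennreal (G (X \<omega>)) * indicator XX (X \<omega>) \<partial>M)"
    by (rule nn_integral_cong_AE) (use AE_X_in_XX in auto)
  also have "\<dots> = (\<integral>\<^sup>+x. (\<Sum>a\<in>{0, 1}.
      \<integral>\<^sup>+y. ennreal (joint_xa p e x a * q x a y) * (ennreal (G x) * indicator XX x) \<partial>lborel) \<partial>lborel)"
    using nn_integral_XAY[of "\<lambda>(x, a, y). ennreal (G x) * indicator XX x"] by simp
  also have "\<dots> = (\<integral>\<^sup>+x. ennreal (indicator XX x * (p x * G x)) \<partial>lborel)"
  proof (rule nn_integral_cong)
    fix x
    show "(\<Sum>a\<in>{0, 1}. \<integral>\<^sup>+y. ennreal (joint_xa p e x a * q x a y) * (ennreal (G x) * indicator XX x) \<partial>lborel)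
        = ennreal (indicator XX x * (p x * G x))"
    proof (cases "x \<in> XX")
      case True
      then have "(\<integral>\<^sup>+y. ennreal (joint_xa p e x a * q x a y) * (ennreal (G x) * indicator XX x) \<partial>lborel)
          = ennreal (joint_xa p e x a * G x)" if "a \<in> {0, 1}" for a
        using nn_integral_weighted_density_const[of "q x a" "joint_xa p e x a"] q_density[OF True that]
          q_nonneg joint_xa_nonneg assms(2)[of x] by (simp add: ennreal_mult)
      then have "(\<Sum>a\<in>{0, 1}. \<integral>\<^sup>+y. ennreal (joint_xa p e x a * q x a y) * (ennreal (G x) * indicator XX x) \<partial>lborel)
          = ennreal (\<Sum>a\<in>{0, 1}. joint_xa p e x a * G x)"
        using joint_xa_nonneg assms(2)[of x] by simp
      also have "(\<Sum>a\<in>{0, 1}. joint_xa p e x a * G x) = p x * G x"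
        by (simp add: joint_xa_def treat_prob_def algebra_simps)
      finally show ?thesis
        using True by simp
    qed simp
  qed
  finally show ?thesis .
qed

definition second_moment_density :: "'x \<Rightarrow> ennreal" where
  "second_moment_density x =
    (\<Sum>a\<in>{0, 1}. \<integral>\<^sup>+y. ennreal (joint_xa p e x a * q x a y) * ennreal (y\<^sup>2) \<partial>lborel)"

lemma measurable_second_moment_density [measurable]:
  "second_moment_density \<in> borel_measurable lborel"
  unfolding second_moment_density_def joint_xa_def treat_prob_def by measurable

lemma nn_integral_second_moment_density_finite:
  "(\<integral>\<^sup>+x. second_moment_density x \<partial>lborel) < \<infinity>"
proof -
  have "(\<integral>\<^sup>+x. second_moment_density x \<partial>lborel) = (\<integral>\<^sup>+\<omega>. ennreal ((Y \<omega>)\<^sup>2) \<partial>M)"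
    using nn_integral_XAY[of "\<lambda>(x, a, y). ennreal (y\<^sup>2)"] by (simp add: second_moment_density_def)
  then show ?thesis
    using nn_integral_eq_integral[OF integrable_Y_sq] by simp
qed

lemma AE_second_moment_density_finite: "AE x in lborel. second_moment_density x \<noteq> \<infinity>"
  using nn_integral_second_moment_density_finite by (intro nn_integral_noteq_infinite) auto

lemma nn_integral_sq_dev_fiber:
  assumes "x \<in> XX" "a \<in> {0, 1}" "second_moment_density x \<noteq> \<infinity>"
  shows "(\<integral>\<^sup>+y. ennreal (joint_xa p e x a * q x a y) * ennreal ((y - c)\<^sup>2) \<partial>lborel)
    = ennreal (joint_xa p e x a * (sigma_y2 q x a + (resp q a x - c)\<^sup>2))"
proof -
  have "(\<integral>\<^sup>+y. ennreal (joint_xa p e x a * q x a y) * ennreal (y\<^sup>2) \<partial>lborel) \<noteq> \<infinity>"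
    using assms(2,3) by (auto simp: second_moment_density_def)
  then show ?thesis
    using nn_integral_weighted_sq_dev[of "q x a" "joint_xa p e x a"] q_density[OF assms(1,2)]
      q_nonneg joint_xa_nonneg by (simp add: sigma_y2_def resp_def)
qed

lemma second_moment_density_eq:
  assumes "x \<in> XX" "second_moment_density x \<noteq> \<infinity>"
  shows "second_moment_density x =
    ennreal (\<Sum>a\<in>{0, 1}. joint_xa p e x a * (sigma_y2 q x a + (resp q a x)\<^sup>2))"
proof -
  have "second_moment_density x =
      (\<Sum>a\<in>{0, 1}. ennreal (joint_xa p e x a * (sigma_y2 q x a + (resp q a x)\<^sup>2)))"
    unfolding second_moment_density_def
    using nn_integral_sq_dev_fiber[OF assms(1) _ assms(2), of _ 0] by (intro sum.cong) auto
  then show ?thesis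
    using joint_xa_nonneg sigma_y2_nonneg by simp
qed

lemma cond_mean_eq_mixture:
  assumes "x \<in> XX" "second_moment_density x \<noteq> \<infinity>" "0 < p x"
  shows "cond_mean e q x = e x * resp q 1 x + (1 - e x) * resp q 0 x"
proof -
  have first_moment: "integrable lborel (\<lambda>y. y * q x a y)" if "a \<in> {0, 1}" "0 < treat_prob e x a" for a
  proof (rule integrable_first_moment_of_second_moment)
    show "integrable lborel (q x a)" using q_density[OF assms(1) that(1)] by simp
    show "integrable lborel (\<lambda>y. y\<^sup>2 * q x a y)"
    proof (rule integrable_second_moment_of_weighted)
      show "0 < joint_xa p e x a" using assms(3) that(2) by (simp add: joint_xa_def)
      show "q x a \<in> borel_measurable lborel"
        using q_density[OF assms(1) that(1)] borel_measurable_integrable by blast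
      show "(\<integral>\<^sup>+y. ennreal (joint_xa p e x a * q x a y) * ennreal (y\<^sup>2) \<partial>lborel) \<noteq> \<infinity>"
        using assms(2) that(1) by (auto simp: second_moment_density_def)
    qed (rule q_nonneg)
  qed (rule q_nonneg)
  consider "e x = 0" | "e x = 1" | "0 < e x" "e x < 1"
    using e_bounds[of x] by fastforce
  then show ?thesis
  proof cases
    case 3
    then have first_moments:
        "integrable lborel (\<lambda>y. y * q x 0 y)" "integrable lborel (\<lambda>y. y * q x 1 y)"
      using first_moment by (simp_all add: treat_prob_def)
    have "cond_mean e q x = (\<integral>y. e x * (y * q x 1 y) + (1 - e x) * (y * q x 0 y) \<partial>lborel)"
      unfolding cond_mean_def by (intro Bochner_Integration.integral_cong) (simp_all add: algebra_simps)
    with first_moments show ?thesis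
      by (simp add: resp_def)
  qed (simp_all add: cond_mean_def resp_def)
qed

definition risk_density :: "'x \<Rightarrow> real \<Rightarrow> real" where
  "risk_density x t = e x * (1 - e x) * (cate q x - t)\<^sup>2 * p x
     + sigma_y2 q x 1 * joint_xa p e x 1 + sigma_y2 q x 0 * joint_xa p e x 0"

lemma risk_density_nonneg: "0 \<le> risk_density x t"
  unfolding risk_density_def using e_bounds[of x] p_nonneg[of x] joint_xa_nonneg sigma_y2_nonneg
  by (intro add_nonneg_nonneg mult_nonneg_nonneg) auto

lemma risk_fiber_eq:
  assumes "x \<in> XX" "second_moment_density x \<noteq> \<infinity>"
  shows "(\<Sum>a\<in>{0, 1}. \<integral>\<^sup>+y. ennreal (joint_xa p e x a * q x a y)
      * ennreal (((y - cond_mean e q x) - (a - e x) * t)\<^sup>2) \<partial>lborel) = ennreal (risk_density x t)"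
proof -
  have "(\<Sum>a\<in>{0, 1}. \<integral>\<^sup>+y. ennreal (joint_xa p e x a * q x a y)
      * ennreal (((y - cond_mean e q x) - (a - e x) * t)\<^sup>2) \<partial>lborel)
    = (\<Sum>a\<in>{0, 1}. ennreal (joint_xa p e x a
        * (sigma_y2 q x a + (resp q a x - (cond_mean e q x + (a - e x) * t))\<^sup>2)))"
    using nn_integral_sq_dev_fiber[OF assms(1) _ assms(2)] by (intro sum.cong) (simp_all add: diff_diff_eq)
  also have "\<dots> = ennreal (\<Sum>a\<in>{0, 1}. joint_xa p e x a
        * (sigma_y2 q x a + (resp q a x - (cond_mean e q x + (a - e x) * t))\<^sup>2))"
    using joint_xa_nonneg sigma_y2_nonneg by (intro sum_ennreal) (auto intro: mult_nonneg_nonneg)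
  also have "(\<Sum>a\<in>{0, 1}. joint_xa p e x a
        * (sigma_y2 q x a + (resp q a x - (cond_mean e q x + (a - e x) * t))\<^sup>2)) = risk_density x t"
  proof (cases "p x = 0")
    case False
    then have mixture: "cond_mean e q x = e x * resp q 1 x + (1 - e x) * resp q 0 x"
      using cond_mean_eq_mixture[OF assms] p_nonneg[of x] by simp
    have "(\<Sum>a\<in>{0, 1}. joint_xa p e x a
        * (sigma_y2 q x a + (resp q a x - (cond_mean e q x + (a - e x) * t))\<^sup>2))
      = p x * ((1 - e x) * (sigma_y2 q x 0 + (resp q 0 x - (cond_mean e q x + (0 - e x) * t))\<^sup>2)
          + e x * (sigma_y2 q x 1 + (resp q 1 x - (cond_mean e q x + (1 - e x) * t))\<^sup>2))"
      by (simp add: joint_xa_def treat_prob_def algebra_simps)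
    also have "\<dots> = p x * (e x * (1 - e x) * (resp q 1 x - resp q 0 x - t)\<^sup>2
          + e x * sigma_y2 q x 1 + (1 - e x) * sigma_y2 q x 0)"
      unfolding mixture weighted_residual_identity ..
    also have "\<dots> = risk_density x t"
      by (simp add: risk_density_def cate_def joint_xa_def treat_prob_def algebra_simps)
    finally show ?thesis .
  qed (simp add: joint_xa_def risk_density_def)
  finally show ?thesis .
qed

lemma risk_density_le:
  "risk_density x t \<le> 2 * (\<Sum>a\<in>{0, 1}. joint_xa p e x a * (sigma_y2 q x a + (resp q a x)\<^sup>2)) + 2 * (p x * t\<^sup>2)"
proof -
  have "p x * (e x * (1 - e x) * (cate q x - t)\<^sup>2 + e x * sigma_y2 q x 1 + (1 - e x) * sigma_y2 q x 0)
      \<le> p x * (2 * ((1 - e x) * (sigma_y2 q x 0 + (resp q 0 x)\<^sup>2) + e x * (sigma_y2 q x 1 + (resp q 1 x)\<^sup>2))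
        + 2 * t\<^sup>2)"
    using weighted_residual_bound e_bounds[of x] sigma_y2_nonneg p_nonneg[of x]
    by (intro mult_left_mono) (auto simp: cate_def)
  then show ?thesis
    by (simp add: joint_xa_def treat_prob_def risk_density_def algebra_simps)
qed

lemma nn_integral_risk:
  assumes [measurable]: "T \<in> borel_measurable lborel"
  shows "(\<integral>\<^sup>+\<omega>. ennreal (((Y \<omega> - cond_mean e q (X \<omega>)) - (A \<omega> - e (X \<omega>)) * T (X \<omega>))\<^sup>2) \<partial>M)
    = (\<integral>\<^sup>+x. ennreal (indicator XX x * risk_density x (T x)) \<partial>lborel)"
proof -
  let ?N = "lborel \<Otimes>\<^sub>M count_space {0, 1} \<Otimes>\<^sub>M (lborel :: real measure)"
  have [measurable]: "(\<lambda>(x :: 'x, a :: real, y :: real). a) \<in> borel_measurable ?N"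
    by (rule measurable_compose[where N = "count_space {0, 1}"]) auto
  let ?h = "\<lambda>(x, a, y). ennreal (((y - cond_mean e q x) - (a - e x) * T x)\<^sup>2) * indicator XX x"
  have "(\<integral>\<^sup>+\<omega>. ennreal (((Y \<omega> - cond_mean e q (X \<omega>)) - (A \<omega> - e (X \<omega>)) * T (X \<omega>))\<^sup>2) \<partial>M)
      = (\<integral>\<^sup>+\<omega>. ?h (X \<omega>, A \<omega>, Y \<omega>) \<partial>M)"
    by (rule nn_integral_cong_AE) (use AE_X_in_XX in auto)
  also have "\<dots> = (\<integral>\<^sup>+x. (\<Sum>a\<in>{0, 1}. \<integral>\<^sup>+y. ennreal (joint_xa p e x a * q x a y) * ?h (x, a, y) \<partial>lborel) \<partial>lborel)"
    by (rule nn_integral_XAY) measurable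
  also have "\<dots> = (\<integral>\<^sup>+x. ennreal (indicator XX x * risk_density x (T x)) \<partial>lborel)"
    using AE_second_moment_density_finite
  proof (rule nn_integral_cong_AE[OF AE_mp], intro AE_I2 impI)
    fix x
    assume "second_moment_density x \<noteq> \<infinity>"
    then show "(\<Sum>a\<in>{0, 1}. \<integral>\<^sup>+y. ennreal (joint_xa p e x a * q x a y) * ?h (x, a, y) \<partial>lborel)
        = ennreal (indicator XX x * risk_density x (T x))"
      using risk_fiber_eq[of x "T x"] by (cases "x \<in> XX") simp_all
  qed
  finally show ?thesis .
qed

lemma risk_density_le_second_moment_density:
  assumes "second_moment_density x \<noteq> \<infinity>"
  shows "ennreal (indicator XX x * risk_density x t)
    \<le> 2 * second_moment_density x + 2 * ennreal (indicator XX x * (p x * t\<^sup>2))"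
proof (cases "x \<in> XX")
  case True
  have "ennreal (risk_density x t) \<le> ennreal (2 * (\<Sum>a\<in>{0, 1}.
      joint_xa p e x a * (sigma_y2 q x a + (resp q a x)\<^sup>2)) + 2 * (p x * t\<^sup>2))"
    by (rule ennreal_leI[OF risk_density_le])
  then show ?thesis
    using True second_moment_density_eq[OF True assms] joint_xa_nonneg sigma_y2_nonneg p_nonneg[of x]
    by (simp add: ennreal_plus ennreal_mult sum_nonneg)
qed simp

lemma nn_integral_risk_finite:
  assumes [measurable]: "T \<in> borel_measurable lborel" and "integrable M (\<lambda>\<omega>. (T (X \<omega>))\<^sup>2)"
  shows "(\<integral>\<^sup>+x. ennreal (indicator XX x * risk_density x (T x)) \<partial>lborel) < \<infinity>"
proof -
  have "(\<integral>\<^sup>+x. ennreal (indicator XX x * risk_density x (T x)) \<partial>lborel)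
      \<le> 2 * (\<integral>\<^sup>+x. second_moment_density x \<partial>lborel)
        + 2 * (\<integral>\<^sup>+x. ennreal (indicator XX x * (p x * (T x)\<^sup>2)) \<partial>lborel)"
    using AE_second_moment_density_finite
    by (subst nn_integral_cmult[symmetric] nn_integral_add[symmetric], measurable)+
      (auto intro!: nn_integral_mono_AE risk_density_le_second_moment_density elim: AE_mp)
  also have "(\<integral>\<^sup>+x. ennreal (indicator XX x * (p x * (T x)\<^sup>2)) \<partial>lborel)
      = (\<integral>\<^sup>+\<omega>. ennreal ((T (X \<omega>))\<^sup>2) \<partial>M)"
    by (rule nn_integral_marginal_X[symmetric]) auto
  also have "2 * (\<integral>\<^sup>+x. second_moment_density x \<partial>lborel) + 2 * \<dots> < \<infinity>"
    using nn_integral_second_moment_density_finite nn_integral_eq_integral[OF assms(2)]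
    by (simp add: ennreal_mult_less_top)
  finally show ?thesis .
qed

lemma risk_integral_eq:
  assumes [measurable]: "T \<in> borel_measurable lborel" and "integrable M (\<lambda>\<omega>. (T (X \<omega>))\<^sup>2)"
  shows "(\<integral>\<omega>. ((Y \<omega> - cond_mean e q (X \<omega>)) - (A \<omega> - e (X \<omega>)) * T (X \<omega>))\<^sup>2 \<partial>M)
    = (\<integral>x\<in>XX. e x * (1 - e x) * (cate q x - T x)\<^sup>2 * p x \<partial>lborel)
      + (\<integral>x\<in>XX. sigma_y2 q x 1 * joint_xa p e x 1 \<partial>lborel)
      + (\<integral>x\<in>XX. sigma_y2 q x 0 * joint_xa p e x 0 \<partial>lborel)" (is "_ = ?rhs")
proof -
  have [measurable]: "(\<lambda>x. risk_density x (T x)) \<in> borel_measurable lborel"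
    unfolding risk_density_def by measurable
  have integrable: "set_integrable lborel XX (\<lambda>x. risk_density x (T x))"
    unfolding set_integrable_def using nn_integral_risk_finite[OF assms] risk_density_nonneg
    by (intro integrableI_nonneg) auto
  have "(\<integral>\<omega>. ((Y \<omega> - cond_mean e q (X \<omega>)) - (A \<omega> - e (X \<omega>)) * T (X \<omega>))\<^sup>2 \<partial>M)
      = enn2real (\<integral>\<^sup>+x. ennreal (indicator XX x * risk_density x (T x)) \<partial>lborel)"
    using nn_integral_risk[OF assms(1)] by (subst integral_eq_nn_integral) auto
  also have "\<dots> = (\<integral>x\<in>XX. risk_density x (T x) \<partial>lborel)"
    unfolding set_lebesgue_integral_def using risk_density_nonneg
    by (simp add: integral_eq_nn_integral)
  also have "\<dots> = ?rhs"
    using integrable unfolding risk_density_def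
  proof (rule set_integral_add3_nonneg[OF sets_XX])
    fix x
    show "0 \<le> e x * (1 - e x) * (cate q x - T x)\<^sup>2 * p x"
      using e_bounds[of x] p_nonneg[of x] by simp
    show "0 \<le> sigma_y2 q x 1 * joint_xa p e x 1" "0 \<le> sigma_y2 q x 0 * joint_xa p e x 0"
      using sigma_y2_nonneg joint_xa_nonneg by simp_all
  qed measurable
  finally show ?thesis .
qed

end

theorem proposition2:
  fixes M :: "'w measure"
    and X :: "'w \<Rightarrow> real ^ 'd" and A :: "'w \<Rightarrow> real" and Y :: "'w \<Rightarrow> real"
    and XX :: "(real ^ 'd) set"
    and p :: "real ^ 'd \<Rightarrow> real" and e :: "real ^ 'd \<Rightarrow> real"
    and q :: "real ^ 'd \<Rightarrow> real \<Rightarrow> real \<Rightarrow> real"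
    and f :: "real ^ 'd \<Rightarrow> real \<Rightarrow> real"
  assumes "prob_space M"
    and "XX \<in> sets lborel"
    and "AE \<omega> in M. X \<omega> \<in> XX"
    and "p \<in> borel_measurable lborel" and "\<And>x. p x \<ge> 0"
    and "e \<in> borel_measurable lborel" and "\<And>x. 0 \<le> e x \<and> e x \<le> 1"
    and "(\<lambda>(x, a, y). q x a y) \<in> borel_measurable (lborel \<Otimes>\<^sub>M count_space {0, 1} \<Otimes>\<^sub>M lborel)"
    and "\<And>x a y. q x a y \<ge> 0"
    and "\<And>x a. x \<in> XX \<Longrightarrow> a \<in> {0, 1} \<Longrightarrow>
           integrable lborel (q x a) \<and> (\<integral>y. q x a y \<partial>lborel) = 1"
    and "distributed M (lborel \<Otimes>\<^sub>M count_space {0, 1} \<Otimes>\<^sub>M lborel)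
           (\<lambda>\<omega>. (X \<omega>, A \<omega>, Y \<omega>))
           (\<lambda>(x, a, y). ennreal (p x * treat_prob e x a * q x a y))"
    and "integrable M (\<lambda>\<omega>. (Y \<omega>)\<^sup>2)"
    and "\<And>a. a \<in> {0, 1} \<Longrightarrow> (\<lambda>x. f x a) \<in> borel_measurable lborel"
    and "\<And>a. a \<in> {0, 1} \<Longrightarrow> integrable M (\<lambda>\<omega>. (f (X \<omega>) a)\<^sup>2)"
  shows "R_risk_star M X A Y (cond_mean e q) e f =
           (\<integral>x\<in>XX. e x * (1 - e x) * (cate q x - tau_f f x)\<^sup>2 * p x \<partial>lborel)
           + sigma_B2 XX p e q 1 + sigma_B2 XX p e q 0"
proof -
  interpret binary_treatment_model M X A Y XX p e q
    using assms(2-12) by unfold_locales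
  have [measurable]: "(\<lambda>x. f x 0) \<in> borel_measurable lborel" "(\<lambda>x. f x 1) \<in> borel_measurable lborel"
    using assms(13) by simp_all
  have "integrable M (\<lambda>\<omega>. (tau_f f (X \<omega>))\<^sup>2)"
    using assms(14) unfolding tau_f_def by (intro integrable_power2_diff) auto
  moreover have "tau_f f \<in> borel_measurable lborel"
    unfolding tau_f_def by measurable
  ultimately show ?thesis
    unfolding R_risk_star_def sigma_B2_def by (rule risk_integral_eq[rotated])
qed

end
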